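(* Let $2<\alpha<4$ and $c\ge1$. For $N_1>0$ set $N_2=cN_1$, and let $(\Lambda_1^*,\Lambda_2^* )$ be the Nash equilibrium of the two-player Variable-Rate Random Access Game in which player $i\in\{1,2\}$ chooses $\Lambda_i\in[0,N_i]$ and receives payoff \[ U_i(\Lambda_1,\Lambda_2)=\Lambda_i\int_0^\infty e^{-(\Lambda_1+\Lambda_2)x^{2/\alpha}}\frac{dx}{1+x}. \] Then, in the limit $N_1\to\infty$, the equilibrium is \[ (\Lambda_1^*,\Lambda_2^* )=\begin{cases}(N_1,N_2), & N_1\le N_2\le \frac{2}{\alpha-2}N_1,\\[2pt] \left(N_1,\frac{2}{\alpha-2}N_1\right), & \frac{2}{\alpha-2}N_1\le N_2,\end{cases} \] in the sense that $\Lambda_1^*=N_1$ and $\Lambda_2^*/N_1\to\min\!\left(c,\frac{2}{\alpha-2}\right)$ as $N_1\to\infty$.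
   Context: A Nash equilibrium is a pair $(\Lambda_1^*,\Lambda_2^* )\in[0,N_1]\times[0,N_2]$ such that $\Lambda_1^*$ maximizes $U_1(\cdot,\Lambda_2^* )$ over $[0,N_1]$ and $\Lambda_2^*$ maximizes $U_2(\Lambda_1^*,\cdot)$ over $[0,N_2]$. *)

theory Defs
  imports "HOL-Analysis.Analysis"
begin

definition vr_integral :: "real \<Rightarrow> real \<Rightarrow> real" where
  "vr_integral \<alpha> s = integral {0<..} (\<lambda>x. exp (- s * x powr (2 / \<alpha>)) / (1 + x))"

definition vr_U1 :: "real \<Rightarrow> real \<Rightarrow> real \<Rightarrow> real" where
  "vr_U1 \<alpha> L1 L2 = L1 * vr_integral \<alpha> (L1 + L2)"

definition vr_U2 :: "real \<Rightarrow> real \<Rightarrow> real \<Rightarrow> real" where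
  "vr_U2 \<alpha> L1 L2 = L2 * vr_integral \<alpha> (L1 + L2)"

definition vr_nash :: "real \<Rightarrow> real \<Rightarrow> real \<Rightarrow> real \<Rightarrow> real \<Rightarrow> bool" where
  "vr_nash \<alpha> N1 N2 L1 L2 \<longleftrightarrow>
     L1 \<in> {0..N1} \<and> L2 \<in> {0..N2} \<and>
     (\<forall>M\<in>{0..N1}. vr_U1 \<alpha> M L2 \<le> vr_U1 \<alpha> L1 L2) \<and>
     (\<forall>M\<in>{0..N2}. vr_U2 \<alpha> L1 M \<le> vr_U2 \<alpha> L1 L2)"

end

theory Submission imports Defs begin

text \<open>Substituting x = s^(-\<alpha>/2) y turns the payoff of a rate L against a fixed opponent rate K into
  L (L+K)^(-\<alpha>/2) J((L+K)^(-\<alpha>/2)), where J(e) = \<integral> exp(-y^(2/\<alpha>)) / (1 + e y) dy is positive,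
  antitone and continuous at 0. The factor L (L+K)^(-\<alpha>/2) increases up to L = 2K/(\<alpha>-2) and decreases
  afterwards, while the J-factor only increases with L; so every best response is at least
  min(N, 2K/(\<alpha>-2)). Since 2/(\<alpha>-2) > 1 for \<alpha> < 4, this forces the first player to play N.
  For large N the J-factor is close to J(0) for all rates of order N, so the second player's best response
  against N is asymptotically the maximiser 2N/(\<alpha>-2) of the first factor, capped at cN.\<close>

lemma exp_minus_mult_power6_le:
  fixes t :: real assumes "t \<ge> 0" shows "exp (-t) * t^6 \<le> 46656"
proof -
  have "t/6 \<le> exp (t/6)" using exp_ge_add_one_self[of "t/6"] by linarith
  hence "(t/6)^6 \<le> exp (t/6)^6" using assms by (intro power_mono) auto
  also have "\<dots> = exp t" using exp_of_nat_mult[of 6 "t/6"] by simp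
  finally have "t^6 \<le> 46656 * exp t" by (simp add: power_divide)
  hence "exp (-t) * t^6 \<le> exp (-t) * (46656 * exp t)" by (intro mult_left_mono) auto
  also have "\<dots> = 46656" by (simp add: exp_minus field_simps)
  finally show ?thesis .
qed

lemma integrable_Ioi_if_bounded_by_stretched_exp:
  fixes f :: "real \<Rightarrow> real" and d :: real
  assumes d: "d \<ge> 1/2" and cont: "continuous_on {0..} f"
    and bound: "\<And>y. y \<ge> 0 \<Longrightarrow> \<bar>f y\<bar> \<le> (1+y) * exp (-(y powr d))"
  shows "f integrable_on {0<..}"
proof -
  have on_unit: "f integrable_on {0..1}"
    by (rule integrable_continuous_interval, rule continuous_on_subset[OF cont]) auto
  have "(\<lambda>y::real. y powr (-2)) integrable_on {1..}"
    using has_integral_powr_to_inf[of "-2" 1] by (auto simp: integrable_on_def)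
  hence majorant: "(\<lambda>y::real. 93312 * y powr (-2)) integrable_on {1..}"
    using integrable_cmul[of _ _ 93312] by simp
  have meas: "f \<in> borel_measurable (lebesgue_on {1..})"
    by (rule continuous_imp_measurable_on_sets_lebesgue, rule continuous_on_subset[OF cont]) auto
  have dominated: "\<bar>f y\<bar> \<le> 93312 * y powr (-2)" if "y \<in> {1..}" for y
  proof -
    from that have y1: "y \<ge> 1" by simp
    define u where "u = y powr d"
    have "u^6 = y powr (6*d)" unfolding u_def using y1
      by (simp add: powr_realpow[symmetric] powr_powr mult.commute)
    also have "\<dots> \<ge> y powr 3" using y1 d by (intro powr_mono) auto
    finally have u6: "y^3 \<le> u^6" using y1 by (simp add: powr_realpow)
    have "exp (-u) * y^3 \<le> exp (-u) * u^6" using u6 by (intro mult_left_mono) auto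
    also have "\<dots> \<le> 46656" by (rule exp_minus_mult_power6_le) (simp add: u_def)
    finally have e: "exp (-u) \<le> 46656 / y^3" using y1 by (simp add: field_simps)
    have "\<bar>f y\<bar> \<le> (1+y) * exp (-u)" using bound[of y] y1 unfolding u_def by simp
    also have "\<dots> \<le> (2*y) * (46656 / y^3)" using y1 e by (intro mult_mono) auto
    also have "\<dots> = 93312 * y powr (-2)" using y1
      by (simp add: powr_minus powr_realpow field_simps power3_eq_cube power2_eq_square)
    finally show ?thesis .
  qed
  have "f integrable_on {1..}"
    by (rule measurable_bounded_by_integrable_imp_integrable_real[OF meas majorant dominated]) auto
  hence "f integrable_on {0..}"
    by (rule integrable_Un'[OF on_unit]) auto
  moreover have "{0<..} - {0..} = ({}::real set)" "{0..} - {0<..} = {0::real}" by auto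
  ultimately show ?thesis
    by (subst integrable_spike_set_eq[of "{0<..}" "{0..}"]) simp_all
qed

lemma continuous_on_exp_minus_powr:
  assumes "p > 0" shows "continuous_on {0..} (\<lambda>y::real. exp (-(y powr p)))"
proof -
  have "continuous_on {0..} (\<lambda>y::real. y powr p)"
    using assms by (intro continuous_on_powr') (auto intro: continuous_intros)
  thus ?thesis by (intro continuous_on_exp continuous_on_minus)
qed

definition vr_kernel :: "real \<Rightarrow> real \<Rightarrow> real \<Rightarrow> real" where
  "vr_kernel \<alpha> e y = exp (-(y powr (2/\<alpha>))) / (1 + e*y)"

definition vr_scaled_integral :: "real \<Rightarrow> real \<Rightarrow> real" where
  "vr_scaled_integral \<alpha> e = integral {0<..} (vr_kernel \<alpha> e)"

lemma continuous_on_vr_kernel: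
  assumes "2 < \<alpha>" "0 \<le> e"
  shows "continuous_on {0..} (vr_kernel \<alpha> e)"
  unfolding vr_kernel_def
proof (rule continuous_on_divide)
  show "continuous_on {0..} (\<lambda>y. exp (-(y powr (2/\<alpha>))))"
    using assms by (intro continuous_on_exp_minus_powr) simp
  show "\<forall>y\<in>{0..}. 1 + e*y \<noteq> 0"
    using assms by (simp add: add_pos_nonneg order.strict_implies_not_eq[symmetric])
qed (intro continuous_intros)

lemma vr_kernel_nonneg: "0 \<le> e \<Longrightarrow> 0 \<le> y \<Longrightarrow> 0 \<le> vr_kernel \<alpha> e y"
  unfolding vr_kernel_def by (simp add: add_pos_nonneg less_imp_le)

lemma vr_kernel_integrable:
  assumes "2 < \<alpha>" "\<alpha> < 4" "0 \<le> e"
  shows "vr_kernel \<alpha> e integrable_on {0<..}"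
proof (rule integrable_Ioi_if_bounded_by_stretched_exp[OF _ continuous_on_vr_kernel])
  fix y :: real assume y: "0 \<le> y"
  have "1 \<le> 1 + e*y" using assms y by simp
  hence "\<bar>vr_kernel \<alpha> e y\<bar> \<le> exp (-(y powr (2/\<alpha>)))"
    unfolding vr_kernel_def by (simp add: divide_le_eq)
  also have "\<dots> \<le> (1+y) * exp (-(y powr (2/\<alpha>)))" using y by simp
  finally show "\<bar>vr_kernel \<alpha> e y\<bar> \<le> (1+y) * exp (-(y powr (2/\<alpha>)))" .
qed (use assms in \<open>simp_all add: field_simps\<close>)

lemma first_moment_integrable:
  assumes "2 < \<alpha>" "\<alpha> < 4"
  shows "(\<lambda>y::real. y * exp (-(y powr (2/\<alpha>)))) integrable_on {0<..}"
proof (rule integrable_Ioi_if_bounded_by_stretched_exp[of "2/\<alpha>"])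
  show "1/2 \<le> 2/\<alpha>" using assms by (simp add: field_simps)
  show "continuous_on {0..} (\<lambda>y. y * exp (-(y powr (2/\<alpha>))))"
    using assms by (intro continuous_on_mult[OF continuous_on_id continuous_on_exp_minus_powr]) auto
qed (simp add: abs_mult)

lemma vr_scaled_integral_antimono:
  assumes "2 < \<alpha>" "\<alpha> < 4" "0 \<le> e" "e \<le> e'"
  shows "vr_scaled_integral \<alpha> e' \<le> vr_scaled_integral \<alpha> e"
  unfolding vr_scaled_integral_def
proof (rule integral_le[OF vr_kernel_integrable vr_kernel_integrable])
  fix y :: real assume "y \<in> {0<..}"
  hence "1 + e*y \<le> 1 + e'*y" "0 < 1 + e*y"
    using assms by (auto intro: mult_right_mono add_pos_nonneg)
  thus "vr_kernel \<alpha> e' y \<le> vr_kernel \<alpha> e y" unfolding vr_kernel_def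
    by (intro divide_left_mono) auto
qed (use assms in auto)

lemma vr_scaled_integral_pos:
  assumes "2 < \<alpha>" "\<alpha> < 4" "0 \<le> e"
  shows "vr_scaled_integral \<alpha> e > 0"
proof -
  have on_interval: "vr_kernel \<alpha> e integrable_on {1/2..1}"
    by (rule integrable_continuous_interval, rule continuous_on_subset[OF continuous_on_vr_kernel])
      (use assms in auto)
  have "0 < integral {1/2..1::real} (\<lambda>y. exp (-1) / (1+e))"
    using assms by simp
  also have "\<dots> \<le> integral {1/2..1} (vr_kernel \<alpha> e)"
  proof (rule integral_le[OF _ on_interval])
    fix y :: real assume "y \<in> {1/2..1}"
    hence y: "1/2 \<le> y" "y \<le> 1" by auto
    have "y powr (2/\<alpha>) \<le> 1" using y assms by (intro powr_le1) auto
    hence "exp (-1) / (1+e) \<le> exp (-(y powr (2/\<alpha>))) / (1+e)"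
      using assms by (intro divide_right_mono) auto
    also have "\<dots> \<le> exp (-(y powr (2/\<alpha>))) / (1+e*y)"
      using y assms by (intro divide_left_mono) (auto simp: mult_left_le add_pos_nonneg)
    finally show "exp (-1) / (1+e) \<le> vr_kernel \<alpha> e y" unfolding vr_kernel_def .
  qed auto
  also have "\<dots> \<le> vr_scaled_integral \<alpha> e"
    unfolding vr_scaled_integral_def
    by (rule integral_subset_le[OF _ on_interval vr_kernel_integrable])
      (use assms in \<open>auto intro: vr_kernel_nonneg\<close>)
  finally show ?thesis .
qed

lemma vr_scaled_integral_0_diff_le:
  assumes "2 < \<alpha>" "\<alpha> < 4" "0 \<le> e"
  shows "vr_scaled_integral \<alpha> 0 - vr_scaled_integral \<alpha> e
           \<le> e * integral {0<..} (\<lambda>y. y * exp (-(y powr (2/\<alpha>))))"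
proof -
  have "vr_scaled_integral \<alpha> 0 - vr_scaled_integral \<alpha> e
          = integral {0<..} (\<lambda>y. vr_kernel \<alpha> 0 y - vr_kernel \<alpha> e y)"
    unfolding vr_scaled_integral_def using assms
    by (intro integral_diff[symmetric] vr_kernel_integrable) auto
  also have "\<dots> \<le> integral {0<..} (\<lambda>y. e * (y * exp (-(y powr (2/\<alpha>)))))"
  proof (rule integral_le)
    show "(\<lambda>y. vr_kernel \<alpha> 0 y - vr_kernel \<alpha> e y) integrable_on {0<..}"
      using assms by (intro integrable_diff vr_kernel_integrable) auto
    show "(\<lambda>y. e * (y * exp (-(y powr (2/\<alpha>))))) integrable_on {0<..}"
      using integrable_cmul[OF first_moment_integrable[OF assms(1,2)], of e] by simp
    fix y :: real assume "y \<in> {0<..}"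
    hence pos: "0 < 1 + e*y" "0 \<le> e*y" using assms by (auto simp: add_pos_nonneg)
    define E where "E = exp (-(y powr (2/\<alpha>)))"
    have "vr_kernel \<alpha> 0 y - vr_kernel \<alpha> e y = E * (e*y) / (1+e*y)"
      unfolding vr_kernel_def E_def[symmetric] using pos by (simp add: field_simps)
    also have "\<dots> \<le> E * (e*y) / 1"
      using pos by (intro divide_left_mono) (auto simp: E_def)
    finally show "vr_kernel \<alpha> 0 y - vr_kernel \<alpha> e y \<le> e * (y * exp (-(y powr (2/\<alpha>))))"
      unfolding E_def by (simp add: mult_ac)
  qed
  also have "\<dots> = e * integral {0<..} (\<lambda>y. y * exp (-(y powr (2/\<alpha>))))"
    by simp
  finally show ?thesis .
qed

lemma tendsto_vr_scaled_integral_0: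
  assumes "2 < \<alpha>" "\<alpha> < 4" and lim: "(f \<longlongrightarrow> 0) F" and nonneg: "\<And>x. 0 \<le> f x"
  shows "((\<lambda>x. vr_scaled_integral \<alpha> (f x)) \<longlongrightarrow> vr_scaled_integral \<alpha> 0) F"
proof (rule tendsto_sandwich)
  define C where "C = integral {0<..} (\<lambda>y::real. y * exp (-(y powr (2/\<alpha>))))"
  show "\<forall>\<^sub>F x in F. vr_scaled_integral \<alpha> 0 - C * f x \<le> vr_scaled_integral \<alpha> (f x)"
    using vr_scaled_integral_0_diff_le[OF assms(1,2) nonneg] unfolding C_def
    by (intro always_eventually allI) (simp add: algebra_simps)
  show "\<forall>\<^sub>F x in F. vr_scaled_integral \<alpha> (f x) \<le> vr_scaled_integral \<alpha> 0"
    using vr_scaled_integral_antimono[OF assms(1,2) order_refl nonneg]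
    by (intro always_eventually allI) simp
  show "((\<lambda>x. vr_scaled_integral \<alpha> 0 - C * f x) \<longlongrightarrow> vr_scaled_integral \<alpha> 0) F"
    using tendsto_diff[OF tendsto_const tendsto_mult_right_zero[OF lim, of C]] by simp
qed simp

lemma vr_integral_eq_scaled:
  assumes "2 < \<alpha>" "\<alpha> < 4" "s > 0"
  shows "vr_integral \<alpha> s = s powr (-(\<alpha>/2)) * vr_scaled_integral \<alpha> (s powr (-(\<alpha>/2)))"
proof -
  define a where "a = s powr (-(\<alpha>/2))"
  have a0: "a > 0" unfolding a_def using assms by simp
  define f where "f = (\<lambda>x::real. exp (- s * x powr (2 / \<alpha>)) / (1 + x))"
  have "a powr (2/\<alpha>) = s powr (-(\<alpha>/2) * (2/\<alpha>))" unfolding a_def by (rule powr_powr)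
  also have "-(\<alpha>/2) * (2/\<alpha>) = -1" using assms by simp
  finally have a_powr: "a powr (2/\<alpha>) = 1/s" using assms by (simp add: powr_minus_divide)
  have subst: "\<bar>a\<bar> * f (a*y) = a * vr_kernel \<alpha> a y" if "y \<in> {0<..}" for y
  proof -
    have "(a*y) powr (2/\<alpha>) = a powr (2/\<alpha>) * y powr (2/\<alpha>)"
      using a0 that by (simp add: powr_mult)
    hence "s * (a*y) powr (2/\<alpha>) = y powr (2/\<alpha>)" using a_powr assms by simp
    thus ?thesis unfolding f_def vr_kernel_def using a0 by (simp add: mult.commute)
  qed
  have "(\<lambda>y. a * vr_kernel \<alpha> a y) absolutely_integrable_on {0<..}"
    using integrable_cmul[OF vr_kernel_integrable[OF assms(1,2), of a], of a] a0
    by (intro nonnegative_absolutely_integrable_1) (auto intro!: mult_nonneg_nonneg vr_kernel_nonneg)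
  hence abs_int: "(\<lambda>y. \<bar>a\<bar> * f (a*y)) absolutely_integrable_on {0<..}"
    unfolding absolutely_integrable_on_def
    using integrable_cong[of "{0<..}" "\<lambda>y. \<bar>a\<bar> * f (a*y)" "\<lambda>y. a * vr_kernel \<alpha> a y"]
      integrable_cong[of "{0<..}" "\<lambda>y. norm (\<bar>a\<bar> * f (a*y))" "\<lambda>y. norm (a * vr_kernel \<alpha> a y)"]
      subst
    by simp
  have int: "integral {0<..} (\<lambda>y. \<bar>a\<bar> * f (a*y)) = a * vr_scaled_integral \<alpha> a"
    unfolding vr_scaled_integral_def by (subst integral_cong[OF subst]) auto
  have image: "(\<lambda>y. a*y) ` {0<..} = {0<..}"
  proof (intro equalityI subsetI)
    fix x :: real assume "x \<in> {0<..}"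
    hence "x = a * (x/a)" "x/a \<in> {0<..}" using a0 by auto
    thus "x \<in> (\<lambda>y. a*y) ` {0<..}" by blast
  qed (use a0 in auto)
  have "f absolutely_integrable_on ((\<lambda>y. a*y) ` {0<..}) \<and>
        integral ((\<lambda>y. a*y) ` {0<..}) f = a * vr_scaled_integral \<alpha> a"
  proof (rule has_absolute_integral_change_of_variables_1'[THEN iffD1])
    show "((\<lambda>y. a*y) has_field_derivative a) (at x within {0<..})" for x
      by (auto intro!: derivative_eq_intros)
    show "inj_on (\<lambda>y. a*y) {0<..}" using a0 by (auto simp: inj_on_def)
  qed (use abs_int int in auto)
  hence "integral {0<..} f = a * vr_scaled_integral \<alpha> a" unfolding image by simp
  thus ?thesis unfolding vr_integral_def f_def a_def by simp
qed

definition load_powr :: "real \<Rightarrow> real \<Rightarrow> real \<Rightarrow> real" where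
  "load_powr b L K = L * (L+K) powr (-b)"

lemma load_powr_has_field_derivative:
  assumes "x + K > 0"
  shows "((\<lambda>x. load_powr b x K) has_field_derivative (x+K) powr (-b-1) * (K - (b-1)*x)) (at x)"
proof -
  have "((\<lambda>x. (x+K) powr (-b)) has_field_derivative (-b) * (x+K) powr (-b - of_nat 1) * 1) (at x)"
    by (rule DERIV_fun_powr[OF DERIV_add[OF DERIV_ident DERIV_const, simplified]]) (use assms in simp)
  moreover have "(x+K) powr (-b) = (x+K) * (x+K) powr (-b-1)"
    using assms powr_add[of "x+K" 1 "-b-1"] by simp
  ultimately show ?thesis unfolding load_powr_def
    by (intro DERIV_cong[OF DERIV_mult[OF DERIV_ident]]) (auto simp: algebra_simps)
qed

lemma continuous_on_load_powr:
  assumes "K > 0" "0 \<le> L"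
  shows "continuous_on {L..L'} (\<lambda>x. load_powr b x K)"
  using assms load_powr_has_field_derivative[THEN DERIV_isCont]
  by (intro continuous_at_imp_continuous_on) auto

lemma load_powr_strict_mono:
  assumes "1 < b" "K > 0" "0 \<le> L" "L < L'" "L' \<le> K/(b-1)"
  shows "load_powr b L K < load_powr b L' K"
proof (rule DERIV_pos_imp_increasing_open[OF assms(4) _ continuous_on_load_powr[OF assms(2,3)]])
  fix x assume x: "L < x" "x < L'"
  hence xK: "x + K > 0" using assms by auto
  have "(b-1)*x < (b-1)*(K/(b-1))" using x assms by (intro mult_strict_left_mono) auto
  hence "(x+K) powr (-b-1) * (K - (b-1)*x) > 0" using xK assms by simp
  with load_powr_has_field_derivative[OF xK]
  show "\<exists>y. ((\<lambda>x. load_powr b x K) has_real_derivative y) (at x) \<and> 0 < y" by blast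
qed

lemma load_powr_strict_antimono:
  assumes "1 < b" "K > 0" "K/(b-1) \<le> L" "L < L'"
  shows "load_powr b L' K < load_powr b L K"
proof -
  have L0: "0 \<le> L" using assms by (smt (verit) divide_pos_pos)
  show ?thesis
  proof (rule DERIV_neg_imp_decreasing_open[OF assms(4) _ continuous_on_load_powr[OF assms(2) L0]])
    fix x assume x: "L < x" "x < L'"
    hence xK: "x + K > 0" using assms L0 by auto
    have "(b-1)*x > (b-1)*(K/(b-1))" using x assms by (intro mult_strict_left_mono) auto
    hence "(x+K) powr (-b-1) * (K - (b-1)*x) < 0" using xK assms by (simp add: mult_pos_neg)
    with load_powr_has_field_derivative[OF xK]
    show "\<exists>y. ((\<lambda>x. load_powr b x K) has_real_derivative y) (at x) \<and> y < 0" by blast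
  qed
qed

lemma load_powr_scale:
  assumes "N > 0" "x \<ge> 0"
  shows "load_powr b (x*N) N = load_powr b x 1 * (N * N powr (-b))"
proof -
  have "(x*N + N) powr (-b) = (x+1) powr (-b) * N powr (-b)"
    using assms powr_mult[of "x+1" N "-b"] by (simp add: algebra_simps)
  thus ?thesis unfolding load_powr_def by simp
qed

lemma vr_payoff_eq:
  assumes "2 < \<alpha>" "\<alpha> < 4" "L + K > 0"
  shows "L * vr_integral \<alpha> (L+K)
           = load_powr (\<alpha>/2) L K * vr_scaled_integral \<alpha> ((L+K) powr (-(\<alpha>/2)))"
  using vr_integral_eq_scaled[OF assms] unfolding load_powr_def by simp

lemma vr_payoff_pos:
  assumes "2 < \<alpha>" "\<alpha> < 4" "L > 0" "K \<ge> 0"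
  shows "L * vr_integral \<alpha> (L+K) > 0"
proof -
  have "L + K > 0" using assms by simp
  thus ?thesis using vr_payoff_eq[OF assms(1,2) \<open>L + K > 0\<close>] assms
      vr_scaled_integral_pos[OF assms(1,2), of "(L+K) powr (-(\<alpha>/2))"]
    by (simp add: load_powr_def)
qed

lemma vr_payoff_strict_mono:
  assumes "2 < \<alpha>" "\<alpha> < 4" "K > 0" "0 \<le> L" "L < L'" "L' \<le> K * (2/(\<alpha>-2))"
  shows "L * vr_integral \<alpha> (L+K) < L' * vr_integral \<alpha> (L'+K)"
proof -
  let ?J = "\<lambda>L. vr_scaled_integral \<alpha> ((L+K) powr (-(\<alpha>/2)))"
  have "K/(\<alpha>/2-1) = K * (2/(\<alpha>-2))" using assms by (simp add: field_simps)
  hence load: "load_powr (\<alpha>/2) L K < load_powr (\<alpha>/2) L' K"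
    using load_powr_strict_mono[of "\<alpha>/2" K L L'] assms by simp
  have "(L'+K) powr (-(\<alpha>/2)) \<le> (L+K) powr (-(\<alpha>/2))"
    using assms by (intro powr_mono2') auto
  hence "?J L \<le> ?J L'" using vr_scaled_integral_antimono[OF assms(1,2)] by simp
  moreover have "?J L > 0" "load_powr (\<alpha>/2) L K \<ge> 0"
    using vr_scaled_integral_pos[OF assms(1,2)] assms by (auto simp: load_powr_def)
  ultimately have "load_powr (\<alpha>/2) L K * ?J L < load_powr (\<alpha>/2) L' K * ?J L"
    "load_powr (\<alpha>/2) L' K * ?J L \<le> load_powr (\<alpha>/2) L' K * ?J L'"
    using load by (auto intro: mult_left_mono)
  thus ?thesis using vr_payoff_eq[OF assms(1,2)] assms by simp
qed

definition vr_best_response :: "real \<Rightarrow> real \<Rightarrow> real \<Rightarrow> real \<Rightarrow> bool" where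
  "vr_best_response \<alpha> K N L \<longleftrightarrow>
     L \<in> {0..N} \<and> (\<forall>M\<in>{0..N}. M * vr_integral \<alpha> (M+K) \<le> L * vr_integral \<alpha> (L+K))"

lemma vr_nash_iff_best_responses:
  "vr_nash \<alpha> N1 N2 L1 L2 \<longleftrightarrow> vr_best_response \<alpha> L2 N1 L1 \<and> vr_best_response \<alpha> L1 N2 L2"
  unfolding vr_nash_def vr_best_response_def vr_U1_def vr_U2_def by (auto simp: add.commute)

lemma vr_best_response_ge:
  assumes "2 < \<alpha>" "\<alpha> < 4" "K > 0" "N > 0" and best: "vr_best_response \<alpha> K N L"
  shows "min N (K * (2/(\<alpha>-2))) \<le> L"
proof (rule ccontr)
  let ?M = "min N (K * (2/(\<alpha>-2)))"
  assume "\<not> ?M \<le> L"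
  hence "L * vr_integral \<alpha> (L+K) < ?M * vr_integral \<alpha> (?M+K)"
    using assms by (intro vr_payoff_strict_mono) (auto simp: vr_best_response_def)
  moreover have "?M \<in> {0..N}" using assms by auto
  ultimately show False using best unfolding vr_best_response_def by fastforce
qed

lemma vr_best_response_pos:
  assumes "2 < \<alpha>" "\<alpha> < 4" "K \<ge> 0" "N > 0" and best: "vr_best_response \<alpha> K N L"
  shows "L > 0"
proof (rule ccontr)
  assume "\<not> L > 0"
  with best have "N * vr_integral \<alpha> (N+K) \<le> 0"
    using \<open>N > 0\<close> unfolding vr_best_response_def by force
  moreover have "N * vr_integral \<alpha> (N+K) > 0" by (rule vr_payoff_pos) (use assms in auto)
  ultimately show False by simp
qed

text \<open>Since 2/(\<alpha>-2) > 1, each player's rate is either capped by its strategy bound or exceeds the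
  other's; as N1 \<le> N2 both players cannot be capped and both cannot exceed, so player 1 is capped.\<close>

lemma vr_nash_first_saturates:
  assumes a: "2 < \<alpha>" "\<alpha> < 4" and "1 \<le> c" "N > 0"
    and nash: "vr_nash \<alpha> N (c * N) E1 E2"
  shows "E1 = N"
proof (rule ccontr)
  define m0 where "m0 = 2/(\<alpha>-2)"
  have m0: "m0 > 1" unfolding m0_def using a by (simp add: field_simps)
  have "N \<le> c*N" using assms by simp
  from nash have best1: "vr_best_response \<alpha> E2 N E1" and best2: "vr_best_response \<alpha> E1 (c*N) E2"
    unfolding vr_nash_iff_best_responses by auto
  hence E: "E1 \<le> N" "E2 \<le> c*N" unfolding vr_best_response_def by auto
  have E2_pos: "E2 > 0"
    by (rule vr_best_response_pos[OF a _ _ best2]) (use best1 assms in \<open>auto simp: vr_best_response_def\<close>)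
  have E1_pos: "E1 > 0"
    by (rule vr_best_response_pos[OF a _ \<open>N > 0\<close> best1]) (use E2_pos in simp)
  have br1: "min N (E2 * m0) \<le> E1" unfolding m0_def
    by (rule vr_best_response_ge[OF a E2_pos \<open>N > 0\<close> best1])
  have br2: "min (c*N) (E1 * m0) \<le> E2" unfolding m0_def
    by (rule vr_best_response_ge[OF a E1_pos _ best2]) (use assms in auto)
  have "E1 < E1 * m0" "E2 < E2 * m0" using E1_pos E2_pos m0 by auto
  assume "E1 \<noteq> N"
  hence "E2 * m0 \<le> E1" using br1 E by (auto simp: min_le_iff_disj)
  hence "E2 < E1" using \<open>E2 < E2 * m0\<close> by linarith
  hence "E1 * m0 \<le> E2" using br2 E \<open>N \<le> c*N\<close> by (auto simp: min_le_iff_disj)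
  thus False using \<open>E2 < E1\<close> \<open>E1 < E1 * m0\<close> by linarith
qed

lemma vr_payoff_scaled:
  assumes "2 < \<alpha>" "\<alpha> < 4" "N > 0" "x \<ge> 0"
  shows "(x*N) * vr_integral \<alpha> (x*N + N)
           = load_powr (\<alpha>/2) x 1 * (N * N powr (-(\<alpha>/2)))
             * vr_scaled_integral \<alpha> (((x+1)*N) powr (-(\<alpha>/2)))"
proof -
  have "x*N + N = (x+1)*N" by (simp add: algebra_simps)
  thus ?thesis
    using vr_payoff_eq[OF assms(1,2), of "x*N" N] load_powr_scale[OF assms(3,4)] assms
    by (simp add: add_pos_nonneg)
qed

lemma vr_payoff_le_beyond:
  assumes a: "2 < \<alpha>" "\<alpha> < 4" and "N > 0" "2/(\<alpha>-2) \<le> A" "A*N \<le> L"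
  shows "L * vr_integral \<alpha> (L + N)
           \<le> load_powr (\<alpha>/2) A 1 * (N * N powr (-(\<alpha>/2))) * vr_scaled_integral \<alpha> 0"
proof -
  define x where "x = L/N"
  have A0: "A > 0" using assms by (smt (verit) divide_pos_pos)
  have x: "A \<le> x" "L = x*N" using assms unfolding x_def by (auto simp: field_simps)
  have "1/(\<alpha>/2-1) = 2/(\<alpha>-2)" using a by (simp add: field_simps)
  hence "load_powr (\<alpha>/2) x 1 \<le> load_powr (\<alpha>/2) A 1"
    using x assms load_powr_strict_antimono[of "\<alpha>/2" 1 A x] by (cases "A = x") auto
  moreover have "vr_scaled_integral \<alpha> (((x+1)*N) powr (-(\<alpha>/2))) \<le> vr_scaled_integral \<alpha> 0"
    by (rule vr_scaled_integral_antimono[OF a]) auto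
  moreover have "0 \<le> load_powr (\<alpha>/2) x 1" "0 \<le> vr_scaled_integral \<alpha> (((x+1)*N) powr (-(\<alpha>/2)))"
    using x A0 vr_scaled_integral_pos[OF a] by (auto simp: load_powr_def less_imp_le)
  ultimately show ?thesis
    using vr_payoff_scaled[OF a \<open>N > 0\<close>, of x] x A0 \<open>N > 0\<close>
    by (simp add: mult_mono mult_right_mono mult.assoc)
qed

lemma tendsto_vr_scaled_integral_at_top:
  assumes a: "2 < \<alpha>" "\<alpha> < 4" and "m > 0"
  shows "((\<lambda>N. vr_scaled_integral \<alpha> ((m*N) powr (-(\<alpha>/2)))) \<longlongrightarrow> vr_scaled_integral \<alpha> 0) at_top"
proof -
  have "filterlim (\<lambda>N. m*N) at_top at_top"
    using assms by (intro filterlim_tendsto_pos_mult_at_top[OF tendsto_const] filterlim_ident) auto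
  hence "((\<lambda>N. (m*N) powr (-(\<alpha>/2))) \<longlongrightarrow> 0) at_top"
    using a by (intro tendsto_neg_powr) auto
  thus ?thesis by (rule tendsto_vr_scaled_integral_0[OF a]) simp
qed

lemma vr_best_response_eventually_below:
  assumes a: "2 < \<alpha>" "\<alpha> < 4" and "2/(\<alpha>-2) < A" "2/(\<alpha>-2) \<le> c"
  shows "\<forall>\<^sub>F N in at_top. \<forall>L. vr_best_response \<alpha> N (c*N) L \<longrightarrow> L < A*N"
proof -
  define m0 where "m0 = 2/(\<alpha>-2)"
  define \<phi> where "\<phi> x = load_powr (\<alpha>/2) x 1" for x
  define J0 where "J0 = vr_scaled_integral \<alpha> 0"
  have m0: "m0 > 0" unfolding m0_def using a by simp
  have "1/(\<alpha>/2-1) = m0" unfolding m0_def using a by (simp add: field_simps)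
  hence \<phi>_lt: "\<phi> A < \<phi> m0" unfolding \<phi>_def
    using load_powr_strict_antimono[of "\<alpha>/2" 1 m0 A] assms m0_def by simp
  have \<phi>_pos: "\<phi> m0 > 0" unfolding \<phi>_def load_powr_def using m0 by simp
  have J0: "J0 > 0" unfolding J0_def using vr_scaled_integral_pos[OF a] by simp
  have "((\<lambda>N. vr_scaled_integral \<alpha> (((m0+1)*N) powr (-(\<alpha>/2)))) \<longlongrightarrow> J0) at_top"
    unfolding J0_def using m0 by (intro tendsto_vr_scaled_integral_at_top[OF a]) simp
  moreover have "\<phi> A / \<phi> m0 * J0 < J0" using \<phi>_lt \<phi>_pos J0 by (simp add: field_simps)
  ultimately have "\<forall>\<^sub>F N in at_top. \<phi> A / \<phi> m0 * J0 < vr_scaled_integral \<alpha> (((m0+1)*N) powr (-(\<alpha>/2)))"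
    by (rule order_tendstoD)
  thus ?thesis using eventually_gt_at_top[of 0]
  proof eventually_elim
    case (elim N)
    let ?Q = "N * N powr (-(\<alpha>/2))"
    have Q: "?Q > 0" using elim by simp
    show ?case
    proof (intro allI impI, rule ccontr)
      fix L :: real
      assume best: "vr_best_response \<alpha> N (c*N) L" and "\<not> L < A*N"
      hence "L * vr_integral \<alpha> (L+N) \<le> \<phi> A * ?Q * J0"
        unfolding \<phi>_def J0_def using elim assms by (intro vr_payoff_le_beyond) auto
      also have "\<dots> < \<phi> m0 * ?Q * vr_scaled_integral \<alpha> (((m0+1)*N) powr (-(\<alpha>/2)))"
        using elim Q \<phi>_pos by (simp add: field_simps)
      also have "\<dots> = (m0*N) * vr_integral \<alpha> (m0*N + N)"
        unfolding \<phi>_def by (rule vr_payoff_scaled[OF a \<open>N > 0\<close> less_imp_le[OF m0], symmetric])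
      also have "\<dots> \<le> L * vr_integral \<alpha> (L+N)"
      proof -
        have "m0*N \<in> {0..c*N}"
          using elim m0 assms(4)[folded m0_def] by (auto intro: mult_right_mono)
        thus ?thesis using best unfolding vr_best_response_def by blast
      qed
      finally show False by simp
    qed
  qed
qed

lemma vr_best_response_ratio_tendsto:
  assumes a: "2 < \<alpha>" "\<alpha> < 4" and "c > 0"
    and best: "\<And>N. N > 0 \<Longrightarrow> vr_best_response \<alpha> N (c*N) (L N)"
  shows "((\<lambda>N. L N / N) \<longlongrightarrow> min c (2/(\<alpha>-2))) at_top"
proof (rule order_tendstoI)
  fix A assume A: "A < min c (2/(\<alpha>-2))"
  have below: "A < L N / N" if "N > 0" for N
  proof -
    have "min (c*N) (N * (2/(\<alpha>-2))) \<le> L N"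
      by (rule vr_best_response_ge[OF a that _ best]) (use that \<open>c > 0\<close> in auto)
    hence "min (c*N) (N * (2/(\<alpha>-2))) / N \<le> L N / N"
      using that by (intro divide_right_mono) auto
    hence "min c (2/(\<alpha>-2)) \<le> L N / N" using that by (simp add: min_divide_distrib_right)
    with A show ?thesis by linarith
  qed
  show "\<forall>\<^sub>F N in at_top. A < L N / N"
    using eventually_mono[OF eventually_gt_at_top[of 0] below] .
next
  fix A assume A: "min c (2/(\<alpha>-2)) < A"
  have "\<forall>\<^sub>F N in at_top. L N < A*N"
  proof (cases "c < A")
    case True
    have capped: "L N < A*N" if "N > 0" for N
      using best[OF that] mult_strict_right_mono[OF True that]
      unfolding vr_best_response_def by auto
    show ?thesis using eventually_mono[OF eventually_gt_at_top[of 0] capped] .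
  next
    case False
    with A have "2/(\<alpha>-2) < A" "2/(\<alpha>-2) \<le> c" by auto
    from vr_best_response_eventually_below[OF a this] eventually_gt_at_top[of 0]
    show ?thesis by eventually_elim (use best in blast)
  qed
  with eventually_gt_at_top[of 0] show "\<forall>\<^sub>F N in at_top. L N / N < A"
    by eventually_elim (simp add: divide_less_eq)
qed

theorem theorem7:
  fixes \<alpha> c :: real and E1 E2 :: "real \<Rightarrow> real"
  assumes "2 < \<alpha>" and "\<alpha> < 4" and "1 \<le> c"
    and "\<And>N1. N1 > 0 \<Longrightarrow> vr_nash \<alpha> N1 (c * N1) (E1 N1) (E2 N1)"
  shows "(\<forall>\<^sub>F N1 in at_top. E1 N1 = N1)
       \<and> ((\<lambda>N1. E2 N1 / N1) \<longlongrightarrow> min c (2 / (\<alpha> - 2))) at_top"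
proof
  have first: "E1 N = N" if "N > 0" for N
    by (rule vr_nash_first_saturates[OF assms(1-3) that assms(4)[OF that]])
  show "\<forall>\<^sub>F N in at_top. E1 N = N"
    using eventually_mono[OF eventually_gt_at_top[of 0] first] .
  have second: "vr_best_response \<alpha> N (c*N) (E2 N)" if "N > 0" for N
    using assms(4)[OF that] first[OF that] unfolding vr_nash_iff_best_responses by simp
  show "((\<lambda>N. E2 N / N) \<longlongrightarrow> min c (2 / (\<alpha> - 2))) at_top"
    by (rule vr_best_response_ratio_tendsto[OF assms(1,2) _ second]) (use assms(3) in auto)
qed

end
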